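(* Let $N\ge 3$, $M\ge 2$, $L\ge1$ be integers, $P>0$, $\tau\in[0,1]$, $\sigma_R>0$, $c_3\in\mathbb{C}\setminus\{0\}$, $\alpha,\beta\in\mathbb{C}$ with $|\alpha|^2+|\beta|^2=1$. Let $\theta\sim\mathcal{U}(-\pi/2,\pi/2)$ and $\mathbf{h}\sim\mathcal{CN}(\mathbf{0},\mathbf{I}_N)$ be independent, and let $\mathrm{CRB}(\theta)$ be the random variable defined below. Then for every $\epsilon>0$, setting $$x_\epsilon=\sqrt{6}\,\sigma_R\left(\epsilon MN\pi^2LP|c_3|^2\Big(|\alpha|^2\tau(M^2-1)+\frac{(N^2-1)(1-\tau)}{N-2}\Big)\right)^{-1/2},$$ we have $P(\mathrm{CRB}(\theta)>\epsilon)\ge \frac{2}{\pi}\sin^{-1}(x_\epsilon)$ if $x_\epsilon<1$, and $P(\mathrm{CRB}(\theta)>\epsilon)\ge 1$ otherwise.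
   Context: Steering vectors: $\mathbf{a}(\theta)\in\mathbb{C}^N$ has $i$-th entry $e^{-j\pi\sin(\theta)\frac{N-(2i-1)}{2}}$, $i=1,\dots,N$; $\mathbf{b}(\theta)\in\mathbb{C}^M$ has $m$-th entry $e^{-j\pi\sin(\theta)\frac{M-(2m-1)}{2}}$. Define $\tilde{\mathbf{a}}=\mathbf{a}/\|\mathbf{a}\|$, $\tilde{\mathbf{h}}=\frac{\mathbf{h}-(\tilde{\mathbf{a}}^H\mathbf{h})\tilde{\mathbf{a}}}{\|\mathbf{h}-(\tilde{\mathbf{a}}^H\mathbf{h})\tilde{\mathbf{a}}\|}$ (well defined almost surely), $\mathbf{t}_1=\alpha\tilde{\mathbf{a}}+\beta\tilde{\mathbf{h}}$, and let $\mathbf{t}_3,\dots,\mathbf{t}_N$ be an orthonormal basis of the orthogonal complement of $\mathrm{span}\{\tilde{\mathbf{a}},\tilde{\mathbf{h}}\}$. Let $\gamma_1=P\tau$, $\gamma_2=\frac{(1-\tau)P}{N-2}$, $\mathbf{R}_x=\gamma_1\mathbf{t}_1\mathbf{t}_1^H+\gamma_2\sum_{i=3}^N\mathbf{t}_i\mathbf{t}_i^H$, $\mathbf{A}(\theta)=\mathbf{b}(\theta)\mathbf{a}(\theta)^H$, $\dot{\mathbf{A}}=\frac{d\mathbf{A}}{d\theta}$, and $$\mathrm{CRB}(\theta)=\frac{\sigma_R^2\,\mathrm{Tr}(\mathbf{A}^H\mathbf{A}\mathbf{R}_x)}{2|c_3|^2L\left(\mathrm{Tr}(\mathbf{A}^H\mathbf{A}\mathbf{R}_x)\,\mathrm{Tr}(\dot{\mathbf{A}}^H\dot{\mathbf{A}}\mathbf{R}_x)-|\mathrm{Tr}(\dot{\mathbf{A}}^H\mathbf{A}\mathbf{R}_x)|^2\right)},$$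 which is a random variable through $\theta$ and $\mathbf{h}$. *)

theory Defs
  imports "HOL-Probability.Probability"
begin

text \<open>Vectors are functions nat => complex (index i = 0..n-1 corresponds to the paper's
  index i+1); matrices are functions nat => nat => complex with explicit dimensions.\<close>

definition steer :: "nat \<Rightarrow> real \<Rightarrow> nat \<Rightarrow> complex" where
  "steer n \<theta> i = exp (- \<i> * complex_of_real (pi * sin \<theta> * (real n - (2 * real (i + 1) - 1)) / 2))"

definition cinner :: "nat \<Rightarrow> (nat \<Rightarrow> complex) \<Rightarrow> (nat \<Rightarrow> complex) \<Rightarrow> complex" where
  "cinner n u v = (\<Sum>i<n. cnj (u i) * v i)"

definition vnorm :: "nat \<Rightarrow> (nat \<Rightarrow> complex) \<Rightarrow> real" where
  "vnorm n v = sqrt (\<Sum>i<n. (cmod (v i))\<^sup>2)"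

definition outer :: "(nat \<Rightarrow> complex) \<Rightarrow> (nat \<Rightarrow> complex) \<Rightarrow> nat \<Rightarrow> nat \<Rightarrow> complex" where
  "outer u v = (\<lambda>i j. u i * cnj (v j))"

definition mmul :: "nat \<Rightarrow> (nat \<Rightarrow> nat \<Rightarrow> complex) \<Rightarrow> (nat \<Rightarrow> nat \<Rightarrow> complex) \<Rightarrow> nat \<Rightarrow> nat \<Rightarrow> complex" where
  "mmul k A B = (\<lambda>i j. \<Sum>l<k. A i l * B l j)"

definition madj :: "(nat \<Rightarrow> nat \<Rightarrow> complex) \<Rightarrow> nat \<Rightarrow> nat \<Rightarrow> complex" where
  "madj A = (\<lambda>i j. cnj (A j i))"

definition mtr :: "nat \<Rightarrow> (nat \<Rightarrow> nat \<Rightarrow> complex) \<Rightarrow> complex" where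
  "mtr n A = (\<Sum>i<n. A i i)"

definition a_tilde :: "nat \<Rightarrow> real \<Rightarrow> nat \<Rightarrow> complex" where
  "a_tilde N \<theta> = (\<lambda>i. steer N \<theta> i / complex_of_real (vnorm N (steer N \<theta>)))"

definition h_tilde :: "nat \<Rightarrow> real \<Rightarrow> (nat \<Rightarrow> complex) \<Rightarrow> nat \<Rightarrow> complex" where
  "h_tilde N \<theta> h = (let av = a_tilde N \<theta>; r = (\<lambda>i. h i - cinner N av h * av i)
     in (\<lambda>i. r i / complex_of_real (vnorm N r)))"

text \<open>Transmit covariance. The sum over an orthonormal basis t_3..t_N of the orthogonal complement
  of span{a~, h~} is (independently of the basis) the orthogonal projector I - a~ a~^H - h~ h~^H.\<close>
definition Rx :: "nat \<Rightarrow> real \<Rightarrow> real \<Rightarrow> complex \<Rightarrow> complex \<Rightarrow> real \<Rightarrow> (nat \<Rightarrow> complex)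
                  \<Rightarrow> nat \<Rightarrow> nat \<Rightarrow> complex" where
  "Rx N P \<tau> \<alpha> \<beta> \<theta> h =
     (let av = a_tilde N \<theta>; ht = h_tilde N \<theta> h;
          t1 = (\<lambda>i. \<alpha> * av i + \<beta> * ht i);
          g1 = P * \<tau>; g2 = (1 - \<tau>) * P / (real N - 2)
      in (\<lambda>i j. complex_of_real g1 * outer t1 t1 i j
               + complex_of_real g2 * ((if i = j then 1 else 0) - outer av av i j - outer ht ht i j)))"

definition Amat :: "nat \<Rightarrow> nat \<Rightarrow> real \<Rightarrow> nat \<Rightarrow> nat \<Rightarrow> complex" where
  "Amat M N \<theta> = outer (steer M \<theta>) (steer N \<theta>)"

definition Adot :: "nat \<Rightarrow> nat \<Rightarrow> real \<Rightarrow> nat \<Rightarrow> nat \<Rightarrow> complex" where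
  "Adot M N \<theta> = (\<lambda>i j. vector_derivative (\<lambda>t. Amat M N t i j) (at \<theta>))"

text \<open>The CRB, as an extended real. When the Fisher-information determinant
  Tr(A^H A R) Tr(Adot^H Adot R) - |Tr(Adot^H A R)|^2 vanishes the CRB is taken to be +infinity.\<close>
definition CRB :: "nat \<Rightarrow> nat \<Rightarrow> nat \<Rightarrow> real \<Rightarrow> real \<Rightarrow> real \<Rightarrow> complex \<Rightarrow> complex \<Rightarrow> complex
                   \<Rightarrow> real \<Rightarrow> (nat \<Rightarrow> complex) \<Rightarrow> ereal" where
  "CRB N M L P \<tau> \<sigma>R c3 \<alpha> \<beta> \<theta> h =
     (let R = Rx N P \<tau> \<alpha> \<beta> \<theta> h; A = Amat M N \<theta>; Ad = Adot M N \<theta>;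
          T1 = mtr N (mmul N (mmul M (madj A) A) R);
          T2 = mtr N (mmul N (mmul M (madj Ad) Ad) R);
          T3 = mtr N (mmul N (mmul M (madj Ad) A) R);
          den = T1 * T2 - complex_of_real ((cmod T3)\<^sup>2)
      in if den = 0 then \<infinity>
         else ereal (Re (complex_of_real (\<sigma>R\<^sup>2) * T1 /
                          (2 * complex_of_real ((cmod c3)\<^sup>2) * of_nat L * den))))"

definition cn_std :: "complex measure" where
  "cn_std = density lborel (\<lambda>z. ennreal (exp (- (cmod z)\<^sup>2) / pi))"

definition joint_law :: "nat \<Rightarrow> (real \<times> (nat \<Rightarrow> complex)) measure" where
  "joint_law N = uniform_measure lborel {-(pi/2)<..<pi/2} \<Otimes>\<^sub>M (\<Pi>\<^sub>M i\<in>{..<N}. cn_std)"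

end

theory Submission
  imports Defs
begin

(* Differentiating a steering vector multiplies entry i by -\<i> (pi cos \<theta> / 2) times its array
   offset, and the offset-weighted vectors are orthogonal to the steering vectors with squared
   norms n(n\<^sup>2-1)/3.  Hence the three traces in the CRB reduce to inner products with the
   orthonormal pair a~, h~, the Fisher determinant factors, and the CRB depends on h only through
   G = |u^H h~|\<^sup>2, which lies in [0, N(N\<^sup>2-1)/3] by Bessel's inequality.  Taking G = 0 bounds the
   CRB below by 6 sigma_R\<^sup>2 / (|c3|\<^sup>2 L pi\<^sup>2 cos\<^sup>2 \<theta> M N P K), K being the bracket in x_\<epsilon>, so
   CRB > \<epsilon> as soon as cos \<theta> < x_\<epsilon>; for \<theta> uniform on (-pi/2, pi/2) this event has probability
   (2/pi) arcsin x_\<epsilon>.  When \<tau> |\<alpha>|\<^sup>2 = 0 the determinant vanishes and the CRB is infinite. *)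

section \<open>Inner products, sesquilinear forms and traces\<close>

lemma cinner_commute: "cinner n x y = cnj (cinner n y x)"
  unfolding cinner_def by (simp add: mult.commute)

lemma cinner_self: "cinner n x x = of_real (\<Sum>i<n. (cmod (x i))\<^sup>2)"
  unfolding cinner_def of_real_sum by (intro sum.cong refl) (metis complex_norm_square mult.commute)

lemma cinner_add_right: "cinner n x (\<lambda>i. y i + z i) = cinner n x y + cinner n x z"
  unfolding cinner_def by (simp add: algebra_simps sum.distrib)

lemma cinner_add_left: "cinner n (\<lambda>i. y i + z i) x = cinner n y x + cinner n z x"
  unfolding cinner_def by (simp add: algebra_simps sum.distrib)

lemma cinner_diff_right: "cinner n x (\<lambda>i. y i - z i) = cinner n x y - cinner n x z"
  unfolding cinner_def by (simp add: algebra_simps sum_subtractf)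

lemma cinner_diff_left: "cinner n (\<lambda>i. y i - z i) x = cinner n y x - cinner n z x"
  unfolding cinner_def by (simp add: algebra_simps sum_subtractf)

lemma cinner_scale_right: "cinner n x (\<lambda>i. c * y i) = c * cinner n x y"
  unfolding cinner_def by (simp add: algebra_simps sum_distrib_left)

lemma cinner_scale_left: "cinner n (\<lambda>i. c * y i) x = cnj c * cinner n y x"
  unfolding cinner_def by (simp add: algebra_simps sum_distrib_left)

lemma norm_cinner_unit_le:
  assumes "cinner n y y = 1"
  shows "(cmod (cinner n y x))\<^sup>2 \<le> Re (cinner n x x)"
proof -
  define c where "c = cinner n y x"
  have "cinner n (\<lambda>i. x i - c * y i) (\<lambda>i. x i - c * y i) =
      cinner n x x - c * cinner n x y - cnj c * cinner n y x + cnj c * c * cinner n y y"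
    unfolding cinner_diff_left cinner_diff_right cinner_scale_left cinner_scale_right
    by (simp add: algebra_simps)
  also have "\<dots> = cinner n x x - of_real ((cmod c)\<^sup>2)"
    using assms cinner_commute[of n x y] unfolding c_def[symmetric] complex_norm_square
    by (simp add: algebra_simps)
  finally have "Re (cinner n x x) - (cmod c)\<^sup>2 = Re (cinner n (\<lambda>i. x i - c * y i) (\<lambda>i. x i - c * y i))"
    by simp
  also have "\<dots> \<ge> 0" unfolding cinner_self by (simp add: sum_nonneg)
  finally show ?thesis unfolding c_def by simp
qed

definition sesqform ::
    "nat \<Rightarrow> (nat \<Rightarrow> nat \<Rightarrow> complex) \<Rightarrow> (nat \<Rightarrow> complex) \<Rightarrow> (nat \<Rightarrow> complex) \<Rightarrow> complex" where
  "sesqform n R x y = (\<Sum>l<n. \<Sum>j<n. cnj (x l) * R l j * y j)"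

definition trace_adj_mult :: "nat \<Rightarrow> nat \<Rightarrow> (nat \<Rightarrow> nat \<Rightarrow> complex)
    \<Rightarrow> (nat \<Rightarrow> nat \<Rightarrow> complex) \<Rightarrow> (nat \<Rightarrow> nat \<Rightarrow> complex) \<Rightarrow> complex" where
  "trace_adj_mult N M X Y R = mtr N (mmul N (mmul M (madj X) Y) R)"

lemma trace_adj_mult_outer:
  "trace_adj_mult N M (outer x1 y1) (outer x2 y2) R = cinner M x1 x2 * sesqform N R y2 y1"
proof -
  have "mmul M (madj (outer x1 y1)) (outer x2 y2) = (\<lambda>i l. y1 i * cinner M x1 x2 * cnj (y2 l))"
    unfolding mmul_def madj_def outer_def cinner_def
    by (intro ext) (simp add: sum_distrib_left sum_distrib_right algebra_simps)
  then have "trace_adj_mult N M (outer x1 y1) (outer x2 y2) R =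
      (\<Sum>i<N. \<Sum>l<N. y1 i * cinner M x1 x2 * cnj (y2 l) * R l i)"
    unfolding trace_adj_mult_def mtr_def by (simp add: mmul_def)
  also have "\<dots> = (\<Sum>l<N. \<Sum>i<N. y1 i * cinner M x1 x2 * cnj (y2 l) * R l i)"
    by (rule sum.swap)
  also have "\<dots> = cinner M x1 x2 * sesqform N R y2 y1"
    unfolding sesqform_def by (simp add: sum_distrib_left algebra_simps)
  finally show ?thesis .
qed

lemma trace_adj_mult_linear_left:
  "trace_adj_mult N M (\<lambda>k i. c1 * X1 k i + c2 * X2 k i) Y R =
     cnj c1 * trace_adj_mult N M X1 Y R + cnj c2 * trace_adj_mult N M X2 Y R"
  unfolding trace_adj_mult_def mtr_def mmul_def madj_def
  by (simp add: algebra_simps sum.distrib sum_distrib_left sum_distrib_right)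

lemma trace_adj_mult_linear_right:
  "trace_adj_mult N M X (\<lambda>k i. c1 * Y1 k i + c2 * Y2 k i) R =
     c1 * trace_adj_mult N M X Y1 R + c2 * trace_adj_mult N M X Y2 R"
  unfolding trace_adj_mult_def mtr_def mmul_def madj_def
  by (simp add: algebra_simps sum.distrib sum_distrib_left sum_distrib_right)

lemma sesqform_Rx:
  "sesqform N (Rx N P \<tau> \<alpha> \<beta> \<theta> h) x y =
    (let av = a_tilde N \<theta>; ht = h_tilde N \<theta> h; t1 = (\<lambda>i. \<alpha> * av i + \<beta> * ht i) in
     of_real (P * \<tau>) * cinner N x t1 * cinner N t1 y
     + of_real ((1 - \<tau>) * P / (real N - 2)) *
       (cinner N x y - cinner N x av * cinner N av y - cinner N x ht * cinner N ht y))"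
proof -
  define av where "av = a_tilde N \<theta>"
  define ht where "ht = h_tilde N \<theta> h"
  define t1 where "t1 = (\<lambda>i. \<alpha> * av i + \<beta> * ht i)"
  define g1 where "g1 = complex_of_real (P * \<tau>)"
  define g2 where "g2 = complex_of_real ((1 - \<tau>) * P / (real N - 2))"
  have identity: "(\<Sum>l<N. \<Sum>j<N. cnj (x l) * (if l = j then 1 else 0) * y j) = cinner N x y"
    unfolding cinner_def by (simp add: if_distrib if_distribR sum.delta cong: if_cong)
  have "Rx N P \<tau> \<alpha> \<beta> \<theta> h = (\<lambda>l j. g1 * (t1 l * cnj (t1 j)) +
      g2 * ((if l = j then 1 else 0) - av l * cnj (av j) - ht l * cnj (ht j)))"
    unfolding Rx_def Let_def av_def ht_def t1_def g1_def g2_def outer_def by simp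
  then have "sesqform N (Rx N P \<tau> \<alpha> \<beta> \<theta> h) x y =
     g1 * (\<Sum>l<N. \<Sum>j<N. (cnj (x l) * t1 l) * (cnj (t1 j) * y j))
     + g2 * ((\<Sum>l<N. \<Sum>j<N. cnj (x l) * (if l = j then 1 else 0) * y j)
             - (\<Sum>l<N. \<Sum>j<N. (cnj (x l) * av l) * (cnj (av j) * y j))
             - (\<Sum>l<N. \<Sum>j<N. (cnj (x l) * ht l) * (cnj (ht j) * y j)))"
    unfolding sesqform_def by (simp add: algebra_simps sum.distrib sum_subtractf sum_distrib_left)
  also have "\<dots> = g1 * cinner N x t1 * cinner N t1 y
     + g2 * (cinner N x y - cinner N x av * cinner N av y - cinner N x ht * cinner N ht y)"
    unfolding identity cinner_def sum_product[symmetric] by (simp only: mult.assoc)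
  finally show ?thesis unfolding Let_def av_def ht_def t1_def g1_def g2_def .
qed

section \<open>Steering vectors and their derivatives\<close>

definition array_offset :: "nat \<Rightarrow> nat \<Rightarrow> real" where
  "array_offset n i = real n - (2 * real (i + 1) - 1)"

definition offset_steer :: "nat \<Rightarrow> real \<Rightarrow> nat \<Rightarrow> complex" where
  "offset_steer n \<theta> i = of_real (array_offset n i) * steer n \<theta> i"

lemma steer_eq_exp: "steer n \<theta> i = exp (- \<i> * of_real (pi * sin \<theta> * array_offset n i / 2))"
  unfolding steer_def array_offset_def ..

lemma Amat_eq_exp:
  "Amat M N \<theta> k j = exp (- \<i> * of_real (pi * sin \<theta> * (array_offset M k - array_offset N j) / 2))"
proof -
  have "Amat M N \<theta> k j = exp (- \<i> * of_real (pi * sin \<theta> * array_offset M k / 2)) *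
      exp (\<i> * of_real (pi * sin \<theta> * array_offset N j / 2))"
    unfolding Amat_def outer_def steer_eq_exp exp_cnj by simp
  then show ?thesis by (simp add: exp_add[symmetric] algebra_simps diff_divide_distrib)
qed

lemma Adot_eq:
  "Adot M N \<theta> = (\<lambda>k j. - \<i> * of_real (pi * cos \<theta> / 2) *
     (outer (offset_steer M \<theta>) (steer N \<theta>) k j - outer (steer M \<theta>) (offset_steer N \<theta>) k j))"
proof (intro ext)
  fix k j
  define c where "c = array_offset M k - array_offset N j"
  define G where "G = (\<lambda>z::complex. exp (- \<i> * (of_real pi * sin z * of_real c / 2)))"
  have A: "(\<lambda>t. Amat M N t k j) = (\<lambda>t. G (of_real t))"
    unfolding G_def Amat_eq_exp c_def by (simp add: sin_of_real)
  have "(G has_field_derivative G (of_real \<theta>) * (- \<i> * (of_real pi * cos (of_real \<theta>) * of_real c / 2)))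
      (at (of_real \<theta>))"
    unfolding G_def by (auto intro!: derivative_eq_intros)
  then have "((\<lambda>t. G (of_real t)) has_vector_derivative
      G (of_real \<theta>) * (- \<i> * (of_real pi * cos (of_real \<theta>) * of_real c / 2))) (at \<theta>)"
    by (rule has_vector_derivative_real_field)
  then have "Adot M N \<theta> k j = - \<i> * of_real (pi * cos \<theta> * c / 2) * Amat M N \<theta> k j"
    unfolding Adot_def A using fun_cong[OF A, of \<theta>]
    by (simp add: vector_derivative_at cos_of_real)
  then show "Adot M N \<theta> k j = - \<i> * of_real (pi * cos \<theta> / 2) *
      (outer (offset_steer M \<theta>) (steer N \<theta>) k j - outer (steer M \<theta>) (offset_steer N \<theta>) k j)"
    unfolding Amat_def outer_def offset_steer_def c_def by (simp add: field_simps)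
qed

lemma one_less_of_nat_squared:
  assumes "2 \<le> M"
  shows "1 < (real M)\<^sup>2"
proof -
  have "(2::real)\<^sup>2 \<le> (real M)\<^sup>2" using assms by (intro power_mono) auto
  then show ?thesis by simp
qed

lemma sum_lessThan_of_nat: "(\<Sum>i<n. real i) = real n * (real n - 1) / 2"
  by (induction n) (auto simp: field_simps)

lemma sum_lessThan_of_nat_squared:
  "(\<Sum>i<n. (real i)\<^sup>2) = real n * (real n - 1) * (2 * real n - 1) / 6"
  by (induction n) (auto simp: field_simps power2_eq_square)

lemma sum_array_offset: "(\<Sum>i<n. array_offset n i) = 0"
proof -
  have "(\<Sum>i<n. array_offset n i) = (\<Sum>i<n. (real n - 1) - 2 * real i)"
    unfolding array_offset_def by (intro sum.cong refl) simp
  also have "\<dots> = real n * (real n - 1) - 2 * (\<Sum>i<n. real i)"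
    by (simp add: sum_subtractf sum_distrib_left)
  finally show ?thesis by (simp add: sum_lessThan_of_nat)
qed

lemma sum_array_offset_squared: "(\<Sum>i<n. (array_offset n i)\<^sup>2) = real n * ((real n)\<^sup>2 - 1) / 3"
proof -
  have "(\<Sum>i<n. (array_offset n i)\<^sup>2) = (\<Sum>i<n. (real n - 1)\<^sup>2 - 4 * (real n - 1) * real i + 4 * (real i)\<^sup>2)"
    unfolding array_offset_def by (intro sum.cong refl) (simp add: power2_eq_square algebra_simps)
  also have "\<dots> = real n * (real n - 1)\<^sup>2 - 4 * (real n - 1) * (\<Sum>i<n. real i) + 4 * (\<Sum>i<n. (real i)\<^sup>2)"
    by (simp add: sum.distrib sum_subtractf sum_distrib_left)
  finally show ?thesis
    unfolding sum_lessThan_of_nat sum_lessThan_of_nat_squared by (simp add: field_simps power2_eq_square)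
qed

lemma norm_steer [simp]: "cmod (steer n \<theta> i) = 1"
  unfolding steer_def by (simp add: norm_exp_eq_Re)

lemma cinner_steer_self: "cinner n (steer n \<theta>) (steer n \<theta>) = of_nat n"
  unfolding cinner_self by simp

lemma vnorm_steer: "vnorm n (steer n \<theta>) = sqrt (real n)"
  unfolding vnorm_def by simp

lemma cinner_steer_offset_steer: "cinner n (steer n \<theta>) (offset_steer n \<theta>) = 0"
proof -
  have unit: "steer n \<theta> i * cnj (steer n \<theta> i) = 1" for i
    using complex_norm_square[of "steer n \<theta> i"] by simp
  have termwise: "cnj (steer n \<theta> i) * (of_real (array_offset n i) * steer n \<theta> i) =
      of_real (array_offset n i)" for i
    by (metis unit mult.commute mult.left_commute mult.right_neutral)
  have "cinner n (steer n \<theta>) (offset_steer n \<theta>) = (\<Sum>i<n. of_real (array_offset n i))"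
    unfolding cinner_def offset_steer_def by (rule sum.cong[OF refl]) (rule termwise)
  then show ?thesis by (simp add: sum_array_offset flip: of_real_sum)
qed

lemma cinner_offset_steer_self:
  "cinner n (offset_steer n \<theta>) (offset_steer n \<theta>) = of_real (real n * ((real n)\<^sup>2 - 1) / 3)"
  unfolding cinner_self offset_steer_def by (simp add: norm_mult sum_array_offset_squared)

section \<open>The transmit covariance on the steering vectors\<close>

lemma a_tilde_eq: "a_tilde N \<theta> = (\<lambda>i. of_real (1 / sqrt (real N)) * steer N \<theta> i)"
  unfolding a_tilde_def vnorm_steer by (simp add: divide_inverse mult.commute)

lemma steer_eq_a_tilde:
  assumes "N > 0"
  shows "steer N \<theta> = (\<lambda>i. of_real (sqrt (real N)) * a_tilde N \<theta> i)"
  using assms unfolding a_tilde_eq by (simp flip: of_real_mult)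

lemma cinner_a_tilde_self:
  assumes "N > 0"
  shows "cinner N (a_tilde N \<theta>) (a_tilde N \<theta>) = 1"
  using assms unfolding a_tilde_eq cinner_scale_left cinner_scale_right cinner_steer_self
  by (simp flip: of_real_mult)

lemma cinner_steer_a_tilde:
  assumes "N > 0"
  shows "cinner N (steer N \<theta>) (a_tilde N \<theta>) = of_real (sqrt (real N))"
  unfolding steer_eq_a_tilde[OF assms] cinner_scale_left cinner_a_tilde_self[OF assms] by simp

lemma cinner_offset_steer_a_tilde: "cinner N (offset_steer N \<theta>) (a_tilde N \<theta>) = 0"
  unfolding a_tilde_eq cinner_scale_right
  by (subst cinner_commute) (simp add: cinner_steer_offset_steer)

lemma h_tilde_eq: "h_tilde N \<theta> h =
    (let r = (\<lambda>i. h i - cinner N (a_tilde N \<theta>) h * a_tilde N \<theta> i)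
     in (\<lambda>i. of_real (1 / vnorm N r) * r i))"
  unfolding h_tilde_def Let_def by (simp add: divide_inverse mult.commute)

lemma cinner_a_tilde_h_tilde:
  assumes "N > 0"
  shows "cinner N (a_tilde N \<theta>) (h_tilde N \<theta> h) = 0"
  unfolding h_tilde_eq Let_def cinner_scale_right cinner_diff_right cinner_a_tilde_self[OF assms]
  by simp

lemma cinner_steer_h_tilde:
  assumes "N > 0"
  shows "cinner N (steer N \<theta>) (h_tilde N \<theta> h) = 0"
  unfolding steer_eq_a_tilde[OF assms] cinner_scale_left cinner_a_tilde_h_tilde[OF assms] by simp

(* h~ is the zero vector when h is parallel to a~, since x / 0 = 0. *)
lemma h_tilde_unit_or_zero:
  "cinner N (h_tilde N \<theta> h) (h_tilde N \<theta> h) = 1 \<or> h_tilde N \<theta> h = (\<lambda>i. 0)"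
proof -
  define r where "r = (\<lambda>i. h i - cinner N (a_tilde N \<theta>) h * a_tilde N \<theta> i)"
  have ht: "h_tilde N \<theta> h = (\<lambda>i. of_real (1 / vnorm N r) * r i)"
    unfolding h_tilde_eq Let_def r_def ..
  have "cinner N r r = of_real ((vnorm N r)\<^sup>2)"
    unfolding cinner_self vnorm_def by (simp add: sum_nonneg)
  then show ?thesis
    unfolding ht cinner_scale_left cinner_scale_right
    by (cases "vnorm N r = 0") (simp_all add: field_simps power2_eq_square)
qed

lemma norm_cinner_h_tilde_le: "(cmod (cinner N u (h_tilde N \<theta> h)))\<^sup>2 \<le> Re (cinner N u u)"
  using h_tilde_unit_or_zero[of N \<theta> h]
proof
  assume "cinner N (h_tilde N \<theta> h) (h_tilde N \<theta> h) = 1"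
  then show ?thesis
    using norm_cinner_unit_le cinner_commute[of N u "h_tilde N \<theta> h"] by fastforce
next
  assume "h_tilde N \<theta> h = (\<lambda>i. 0)"
  then show ?thesis unfolding cinner_self by (simp add: cinner_def sum_nonneg)
qed

lemma sesqform_Rx_steer:
  fixes N :: nat and P \<tau> \<theta> :: real and \<alpha> \<beta> :: complex and h :: "nat \<Rightarrow> complex"
  assumes N: "N > 0"
  defines "R \<equiv> Rx N P \<tau> \<alpha> \<beta> \<theta> h" and "a \<equiv> steer N \<theta>" and "u \<equiv> offset_steer N \<theta>"
    and "g \<equiv> cinner N (offset_steer N \<theta>) (h_tilde N \<theta> h)"
  shows "sesqform N R a a = of_real (P * \<tau> * real N * (cmod \<alpha>)\<^sup>2)"
    and "sesqform N R a u = of_real (P * \<tau>) * \<alpha> * of_real (sqrt (real N)) * cnj \<beta> * cnj g"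
    and "sesqform N R u u = of_real (P * \<tau> * (cmod \<beta>)\<^sup>2 * (cmod g)\<^sup>2
           + (1 - \<tau>) * P / (real N - 2) * (real N * ((real N)\<^sup>2 - 1) / 3 - (cmod g)\<^sup>2))"
proof -
  define av where "av = a_tilde N \<theta>"
  define ht where "ht = h_tilde N \<theta> h"
  define sN where "sN = complex_of_real (sqrt (real N))"
  have sN: "sN * sN = of_nat N" "cnj sN = sN"
    unfolding sN_def by (simp_all flip: of_real_mult)
  have av_ht: "cinner N av ht = 0" "cinner N ht av = 0"
    using cinner_a_tilde_h_tilde[OF N] cinner_commute unfolding av_def ht_def
    by (metis complex_cnj_zero)+
  have a_ht: "cinner N a ht = 0" "cinner N ht a = 0"
    using cinner_steer_h_tilde[OF N] cinner_commute unfolding a_def ht_def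
    by (metis complex_cnj_zero)+
  have a_av: "cinner N a av = sN" "cinner N av a = sN"
    using cinner_steer_a_tilde[OF N] cinner_commute sN(2) unfolding a_def av_def sN_def by metis+
  have u_av: "cinner N u av = 0" "cinner N av u = 0"
    using cinner_offset_steer_a_tilde cinner_commute unfolding u_def av_def by (metis complex_cnj_zero)+
  have a_u: "cinner N a u = 0" "cinner N u a = 0"
    using cinner_steer_offset_steer cinner_commute unfolding u_def a_def by (metis complex_cnj_zero)+
  have u_ht: "cinner N u ht = g" "cinner N ht u = cnj g"
    unfolding u_def ht_def g_def by (simp_all add: cinner_commute[of N "h_tilde N \<theta> h"])
  have aa: "cinner N a a = of_nat N" unfolding a_def by (rule cinner_steer_self)
  have uu: "cinner N u u = of_real (real N * ((real N)\<^sup>2 - 1) / 3)"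
    unfolding u_def by (rule cinner_offset_steer_self)
  note form = sesqform_Rx[of N P \<tau> \<alpha> \<beta> \<theta> h, folded R_def av_def ht_def, unfolded Let_def
      cinner_add_left cinner_add_right cinner_scale_left cinner_scale_right]
  show "sesqform N R a a = of_real (P * \<tau> * real N * (cmod \<alpha>)\<^sup>2)"
    unfolding form a_ht a_av aa using sN complex_norm_square[of \<alpha>] by (simp add: algebra_simps)
  show "sesqform N R a u = of_real (P * \<tau>) * \<alpha> * of_real (sqrt (real N)) * cnj \<beta> * cnj g"
    unfolding form a_ht a_av a_u u_av u_ht sN_def[symmetric] by (simp add: algebra_simps)
  show "sesqform N R u u = of_real (P * \<tau> * (cmod \<beta>)\<^sup>2 * (cmod g)\<^sup>2
      + (1 - \<tau>) * P / (real N - 2) * (real N * ((real N)\<^sup>2 - 1) / 3 - (cmod g)\<^sup>2))"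
    unfolding form u_av u_ht uu using complex_norm_square[of \<beta>] complex_norm_square[of g]
    by (simp add: algebra_simps)
qed

lemma trace_adj_mult_fisher:
  fixes N M :: nat and P \<tau> \<theta> :: real and \<alpha> \<beta> :: complex and h :: "nat \<Rightarrow> complex"
  assumes N: "N > 0"
  defines "R \<equiv> Rx N P \<tau> \<alpha> \<beta> \<theta> h" and "g \<equiv> cinner N (offset_steer N \<theta>) (h_tilde N \<theta> h)"
    and "w \<equiv> pi * cos \<theta> / 2" and "Q \<equiv> P * \<tau> * real N * (cmod \<alpha>)\<^sup>2"
  defines "V \<equiv> P * \<tau> * (cmod \<beta>)\<^sup>2 * (cmod g)\<^sup>2
           + (1 - \<tau>) * P / (real N - 2) * (real N * ((real N)\<^sup>2 - 1) / 3 - (cmod g)\<^sup>2)"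
  shows "trace_adj_mult N M (Amat M N \<theta>) (Amat M N \<theta>) R = of_real (real M * Q)"
    and "trace_adj_mult N M (Adot M N \<theta>) (Adot M N \<theta>) R =
           of_real (w\<^sup>2 * (real M * ((real M)\<^sup>2 - 1) / 3 * Q + real M * V))"
    and "trace_adj_mult N M (Adot M N \<theta>) (Amat M N \<theta>) R =
           - \<i> * of_real w * of_nat M * (of_real (P * \<tau>) * \<alpha> * of_real (sqrt (real N)) * cnj \<beta> * cnj g)"
proof -
  define c where "c = - \<i> * of_real w"
  have A: "Amat M N \<theta> = outer (steer M \<theta>) (steer N \<theta>)"
    unfolding Amat_def ..
  have Ad: "Adot M N \<theta> = (\<lambda>k j. c * outer (offset_steer M \<theta>) (steer N \<theta>) k j
                                   + (- c) * outer (steer M \<theta>) (offset_steer N \<theta>) k j)"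
    unfolding Adot_eq c_def w_def by (simp add: algebra_simps)
  have "cinner M (offset_steer M \<theta>) (steer M \<theta>) = 0"
    using cinner_steer_offset_steer cinner_commute by (metis complex_cnj_zero)
  note inner = this cinner_steer_offset_steer cinner_steer_self cinner_offset_steer_self
  note form = sesqform_Rx_steer[OF N, of P \<tau> \<alpha> \<beta> \<theta> h, folded R_def g_def]
  have cc: "cnj c * c = of_real (w\<^sup>2)"
    unfolding c_def by (simp add: power2_eq_square algebra_simps)
  show "trace_adj_mult N M (Amat M N \<theta>) (Amat M N \<theta>) R = of_real (real M * Q)"
    unfolding A trace_adj_mult_outer inner form Q_def by simp
  have "trace_adj_mult N M (Adot M N \<theta>) (Adot M N \<theta>) R =
      cnj c * c * (of_real (real M * ((real M)\<^sup>2 - 1) / 3) * of_real Q + of_nat M * of_real V)"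
    unfolding Ad trace_adj_mult_linear_left trace_adj_mult_linear_right trace_adj_mult_outer
      inner form Q_def V_def by (simp add: algebra_simps)
  then show "trace_adj_mult N M (Adot M N \<theta>) (Adot M N \<theta>) R =
      of_real (w\<^sup>2 * (real M * ((real M)\<^sup>2 - 1) / 3 * Q + real M * V))"
    unfolding cc by simp
  show "trace_adj_mult N M (Adot M N \<theta>) (Amat M N \<theta>) R =
      - \<i> * of_real w * of_nat M * (of_real (P * \<tau>) * \<alpha> * of_real (sqrt (real N)) * cnj \<beta> * cnj g)"
    unfolding Ad A trace_adj_mult_linear_left trace_adj_mult_outer inner form c_def
    by (simp add: algebra_simps)
qed

section \<open>Closed form and lower bound of the CRB\<close>

lemma CRB_closed_form:
  fixes N M L :: nat and P \<tau> \<sigma>R \<theta> :: real and c3 \<alpha> \<beta> :: complex and h :: "nat \<Rightarrow> complex"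
  assumes N: "N > 0"
  defines "g \<equiv> cinner N (offset_steer N \<theta>) (h_tilde N \<theta> h)"
    and "w \<equiv> pi * cos \<theta> / 2" and "Q \<equiv> P * \<tau> * real N * (cmod \<alpha>)\<^sup>2"
  defines "Z \<equiv> real M * ((real M)\<^sup>2 - 1) / 3 * Q
    + real M * ((1 - \<tau>) * P / (real N - 2)) * (real N * ((real N)\<^sup>2 - 1) / 3 - (cmod g)\<^sup>2)"
  shows "CRB N M L P \<tau> \<sigma>R c3 \<alpha> \<beta> \<theta> h =
    (if real M * w\<^sup>2 * Q * Z = 0 then \<infinity> else ereal (\<sigma>R\<^sup>2 / (2 * (cmod c3)\<^sup>2 * real L * w\<^sup>2 * Z)))"
proof -
  define V where "V = P * \<tau> * (cmod \<beta>)\<^sup>2 * (cmod g)\<^sup>2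
    + (1 - \<tau>) * P / (real N - 2) * (real N * ((real N)\<^sup>2 - 1) / 3 - (cmod g)\<^sup>2)"
  define S where "S = of_real (P * \<tau>) * \<alpha> * of_real (sqrt (real N)) * cnj \<beta> * cnj g"
  have T1: "trace_adj_mult N M (Amat M N \<theta>) (Amat M N \<theta>) (Rx N P \<tau> \<alpha> \<beta> \<theta> h) = of_real (real M * Q)"
    unfolding Q_def by (rule trace_adj_mult_fisher(1)[OF N])
  have T2: "trace_adj_mult N M (Adot M N \<theta>) (Adot M N \<theta>) (Rx N P \<tau> \<alpha> \<beta> \<theta> h) =
      of_real (w\<^sup>2 * (real M * ((real M)\<^sup>2 - 1) / 3 * Q + real M * V))"
    unfolding w_def Q_def V_def g_def by (rule trace_adj_mult_fisher(2)[OF N])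
  have T3: "trace_adj_mult N M (Adot M N \<theta>) (Amat M N \<theta>) (Rx N P \<tau> \<alpha> \<beta> \<theta> h) =
      - \<i> * of_real w * of_nat M * S"
    unfolding S_def g_def w_def by (rule trace_adj_mult_fisher(3)[OF N])
  have "(cmod (- \<i> * of_real w * of_nat M * S))\<^sup>2 =
      w\<^sup>2 * (real M)\<^sup>2 * ((P * \<tau>)\<^sup>2 * real N * (cmod \<alpha>)\<^sup>2 * (cmod \<beta>)\<^sup>2 * (cmod g)\<^sup>2)"
    unfolding S_def by (simp add: norm_mult power_mult_distrib)
  then have det: "of_real (real M * Q) * of_real (w\<^sup>2 * (real M * ((real M)\<^sup>2 - 1) / 3 * Q + real M * V))
      - complex_of_real ((cmod (- \<i> * of_real w * of_nat M * S))\<^sup>2) = of_real (real M * w\<^sup>2 * Q * Z)"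
    unfolding V_def Z_def Q_def by (simp add: algebra_simps power2_eq_square flip: of_real_mult of_real_diff)
  have "complex_of_real (\<sigma>R\<^sup>2) * of_real (real M * Q) /
      (2 * of_real ((cmod c3)\<^sup>2) * of_nat L * of_real (real M * w\<^sup>2 * Q * Z)) =
      of_real (\<sigma>R\<^sup>2 * (real M * Q) / (2 * (cmod c3)\<^sup>2 * real L * (real M * w\<^sup>2 * Q * Z)))"
    by simp
  moreover have "\<sigma>R\<^sup>2 * (real M * Q) / (2 * (cmod c3)\<^sup>2 * real L * (real M * w\<^sup>2 * Q * Z)) =
      \<sigma>R\<^sup>2 / (2 * (cmod c3)\<^sup>2 * real L * w\<^sup>2 * Z)" if "real M * w\<^sup>2 * Q * Z \<noteq> 0"
  proof -
    have "real M * Q \<noteq> 0" using that by simp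
    from mult_divide_mult_cancel_left[OF this, of "\<sigma>R\<^sup>2" "2 * (cmod c3)\<^sup>2 * real L * w\<^sup>2 * Z"]
    show ?thesis by (simp only: ac_simps)
  qed
  ultimately show ?thesis
    unfolding CRB_def Let_def trace_adj_mult_def[symmetric] T1 T2 T3 det by simp
qed

lemma CRB_eq:
  fixes N M L :: nat and P \<tau> \<sigma>R \<theta> :: real and c3 \<alpha> \<beta> :: complex and h :: "nat \<Rightarrow> complex"
  assumes N: "N \<ge> 3" and M: "M \<ge> 2" and P: "P > 0" and \<tau>: "0 \<le> \<tau>" "\<tau> \<le> 1" and cos: "cos \<theta> > 0"
  obtains G where "0 \<le> G" and "G \<le> real N * ((real N)\<^sup>2 - 1) / 3"
    and "CRB N M L P \<tau> \<sigma>R c3 \<alpha> \<beta> \<theta> h =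
      (if \<tau> = 0 \<or> \<alpha> = 0 then \<infinity>
       else ereal (\<sigma>R\<^sup>2 / (2 * (cmod c3)\<^sup>2 * real L * (pi * cos \<theta> / 2)\<^sup>2 *
         (real M * ((real M)\<^sup>2 - 1) / 3 * (P * \<tau> * real N * (cmod \<alpha>)\<^sup>2)
          + real M * ((1 - \<tau>) * P / (real N - 2)) * (real N * ((real N)\<^sup>2 - 1) / 3 - G)))))"
proof -
  define g where "g = cinner N (offset_steer N \<theta>) (h_tilde N \<theta> h)"
  define w where "w = pi * cos \<theta> / 2"
  define Q where "Q = P * \<tau> * real N * (cmod \<alpha>)\<^sup>2"
  define E2 where "E2 = real M * ((real M)\<^sup>2 - 1) / 3"
  define U where "U = real N * ((real N)\<^sup>2 - 1) / 3"
  define g2 where "g2 = (1 - \<tau>) * P / (real N - 2)"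
  define Z where "Z = E2 * Q + real M * g2 * (U - (cmod g)\<^sup>2)"
  have N0: "N > 0" using N by simp
  have CRB: "CRB N M L P \<tau> \<sigma>R c3 \<alpha> \<beta> \<theta> h = (if real M * w\<^sup>2 * Q * Z = 0 then \<infinity>
      else ereal (\<sigma>R\<^sup>2 / (2 * (cmod c3)\<^sup>2 * real L * w\<^sup>2 * Z)))"
    unfolding Z_def E2_def g2_def U_def w_def Q_def g_def by (rule CRB_closed_form[OF N0])
  have G: "(cmod g)\<^sup>2 \<le> U"
    using norm_cinner_h_tilde_le[of N "offset_steer N \<theta>" \<theta> h]
    unfolding g_def U_def cinner_offset_steer_self by simp
  have Q0: "Q = 0 \<longleftrightarrow> \<tau> = 0 \<or> \<alpha> = 0"
    unfolding Q_def using P N0 by simp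
  have "Z > 0" if "Q \<noteq> 0"
  proof -
    have "E2 > 0" unfolding E2_def using M one_less_of_nat_squared[OF M] by simp
    moreover have "Q > 0" using that P \<tau> unfolding Q_def by simp
    moreover have "g2 \<ge> 0" unfolding g2_def using N P \<tau> by simp
    ultimately show ?thesis unfolding Z_def using G by (simp add: add_pos_nonneg)
  qed
  moreover have "w > 0" unfolding w_def using cos by simp
  ultimately have "CRB N M L P \<tau> \<sigma>R c3 \<alpha> \<beta> \<theta> h =
      (if \<tau> = 0 \<or> \<alpha> = 0 then \<infinity> else ereal (\<sigma>R\<^sup>2 / (2 * (cmod c3)\<^sup>2 * real L * w\<^sup>2 * Z)))"
    unfolding CRB Q0[symmetric] using M by auto
  then show ?thesis
    by (intro that[of "(cmod g)\<^sup>2"]) (use G in \<open>simp_all add: w_def Z_def E2_def Q_def g2_def U_def\<close>)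
qed

lemma CRB_eq_infinity:
  fixes N M L :: nat and P \<tau> \<sigma>R \<theta> :: real and c3 \<alpha> \<beta> :: complex and h :: "nat \<Rightarrow> complex"
  assumes "N \<ge> 3" and "M \<ge> 2" and "P > 0" and "0 \<le> \<tau>" "\<tau> \<le> 1" and "cos \<theta> > 0"
    and "\<tau> = 0 \<or> \<alpha> = 0"
  shows "CRB N M L P \<tau> \<sigma>R c3 \<alpha> \<beta> \<theta> h = \<infinity>"
  using assms by (metis (no_types, lifting) CRB_eq)

lemma CRB_constant_pos:
  fixes M N :: nat
  assumes "M \<ge> 2" and "N \<ge> 3" and "0 < \<tau>" and "\<tau> \<le> 1" and "\<alpha> \<noteq> 0"
  shows "0 < (cmod \<alpha>)\<^sup>2 * \<tau> * ((real M)\<^sup>2 - 1) + ((real N)\<^sup>2 - 1) * (1 - \<tau>) / (real N - 2)"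
proof -
  have "0 < (cmod \<alpha>)\<^sup>2 * \<tau> * ((real M)\<^sup>2 - 1)"
    using one_less_of_nat_squared[OF assms(1)] assms by simp
  moreover have "0 \<le> ((real N)\<^sup>2 - 1) * (1 - \<tau>) / (real N - 2)"
    using one_less_of_nat_squared[of N] assms by simp
  ultimately show ?thesis by simp
qed

lemma CRB_lower_bound:
  fixes N M L :: nat and P \<tau> \<sigma>R \<theta> :: real and c3 \<alpha> \<beta> :: complex and h :: "nat \<Rightarrow> complex"
  assumes N: "N \<ge> 3" and M: "M \<ge> 2" and L: "L \<ge> 1" and P: "P > 0" and \<tau>: "0 \<le> \<tau>" "\<tau> \<le> 1"
    and c3: "c3 \<noteq> 0" and cos: "cos \<theta> > 0" and nonzero: "\<tau> \<noteq> 0" "\<alpha> \<noteq> 0"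
  defines "K \<equiv> (cmod \<alpha>)\<^sup>2 * \<tau> * ((real M)\<^sup>2 - 1) + ((real N)\<^sup>2 - 1) * (1 - \<tau>) / (real N - 2)"
  shows "ereal (6 * \<sigma>R\<^sup>2 / ((cmod c3)\<^sup>2 * real L * pi\<^sup>2 * (cos \<theta>)\<^sup>2 * real M * real N * P * K))
           \<le> CRB N M L P \<tau> \<sigma>R c3 \<alpha> \<beta> \<theta> h"
proof -
  define w where "w = pi * cos \<theta> / 2"
  define C where "C = 2 * (cmod c3)\<^sup>2 * real L"
  define Q where "Q = P * \<tau> * real N * (cmod \<alpha>)\<^sup>2"
  define E2 where "E2 = real M * ((real M)\<^sup>2 - 1) / 3"
  define U where "U = real N * ((real N)\<^sup>2 - 1) / 3"
  define g2 where "g2 = (1 - \<tau>) * P / (real N - 2)"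
  obtain G where G: "0 \<le> G" "G \<le> U"
    and eq: "CRB N M L P \<tau> \<sigma>R c3 \<alpha> \<beta> \<theta> h = ereal (\<sigma>R\<^sup>2 / (C * w\<^sup>2 * (E2 * Q + real M * g2 * (U - G))))"
    using CRB_eq[OF N M P \<tau> cos, of L \<sigma>R c3 \<alpha> \<beta> h] nonzero
    unfolding w_def C_def Q_def E2_def U_def g2_def by (metis (no_types, lifting) mult.assoc)
  have pos: "C > 0" "w > 0" "E2 > 0" "Q > 0" "g2 \<ge> 0"
    unfolding C_def w_def E2_def Q_def g2_def
    using L c3 cos M one_less_of_nat_squared[OF M] P \<tau> nonzero N by simp_all
  have "K > 0"
    unfolding K_def using CRB_constant_pos[OF M N _ \<tau>(2) nonzero(2)] \<tau> nonzero by simp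
  have key: "w\<^sup>2 * (E2 * Q + real M * g2 * U) = pi\<^sup>2 * (cos \<theta>)\<^sup>2 * real M * real N * P * K / 12"
    using N unfolding w_def E2_def Q_def g2_def U_def K_def by (simp add: field_simps power2_eq_square)
  have "6 * \<sigma>R\<^sup>2 / ((cmod c3)\<^sup>2 * real L * pi\<^sup>2 * (cos \<theta>)\<^sup>2 * real M * real N * P * K) =
      \<sigma>R\<^sup>2 / (C * (pi\<^sup>2 * (cos \<theta>)\<^sup>2 * real M * real N * P * K / 12))"
    unfolding C_def using \<open>K > 0\<close> c3 L cos P M N by (simp add: field_simps)
  also have "\<dots> = \<sigma>R\<^sup>2 / (C * (w\<^sup>2 * (E2 * Q + real M * g2 * U)))"
    by (simp only: key)
  also have "\<dots> \<le> \<sigma>R\<^sup>2 / (C * (w\<^sup>2 * (E2 * Q + real M * g2 * (U - G))))"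
  proof -
    have "0 < E2 * Q + real M * g2 * (U - G)"
      using pos G by (simp add: add_pos_nonneg)
    moreover have "E2 * Q + real M * g2 * (U - G) \<le> E2 * Q + real M * g2 * U"
      using pos G by (simp add: mult_left_mono)
    ultimately show ?thesis
      using pos by (intro divide_left_mono mult_left_mono mult_pos_pos) auto
  qed
  finally show ?thesis
    unfolding eq by (simp add: mult.assoc)
qed

lemma CRB_greater_of_cos_less:
  fixes N M L :: nat and P \<tau> \<sigma>R \<epsilon> \<theta> :: real and c3 \<alpha> \<beta> :: complex and h :: "nat \<Rightarrow> complex"
  assumes N: "N \<ge> 3" and M: "M \<ge> 2" and L: "L \<ge> 1" and P: "P > 0" and \<tau>: "0 \<le> \<tau>" "\<tau> \<le> 1"
    and c3: "c3 \<noteq> 0" and \<epsilon>: "\<epsilon> > 0" and cos: "cos \<theta> > 0"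
  defines "D \<equiv> \<epsilon> * real M * real N * pi\<^sup>2 * real L * P * (cmod c3)\<^sup>2 *
             ((cmod \<alpha>)\<^sup>2 * \<tau> * ((real M)\<^sup>2 - 1) + ((real N)\<^sup>2 - 1) * (1 - \<tau>) / (real N - 2))"
  assumes less: "D > 0 \<Longrightarrow> cos \<theta> < sqrt 6 * \<sigma>R / sqrt D"
  shows "ereal \<epsilon> < CRB N M L P \<tau> \<sigma>R c3 \<alpha> \<beta> \<theta> h"
proof (cases "\<tau> = 0 \<or> \<alpha> = 0")
  case True
  then show ?thesis using CRB_eq_infinity[OF N M P \<tau> cos] by simp
next
  case False
  define K where "K = (cmod \<alpha>)\<^sup>2 * \<tau> * ((real M)\<^sup>2 - 1) + ((real N)\<^sup>2 - 1) * (1 - \<tau>) / (real N - 2)"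
  define Y where "Y = (cmod c3)\<^sup>2 * real L * pi\<^sup>2 * real M * real N * P * K"
  have "K > 0"
    unfolding K_def using CRB_constant_pos[OF M N _ \<tau>(2)] \<tau> False by simp
  then have Y: "Y > 0" unfolding Y_def using c3 L M N P by simp
  moreover have "D = \<epsilon> * Y" unfolding D_def Y_def K_def by (simp add: ac_simps)
  ultimately have "cos \<theta> < sqrt 6 * \<sigma>R / sqrt (\<epsilon> * Y)" using less \<epsilon> by simp
  then have "(cos \<theta>)\<^sup>2 < (sqrt 6 * \<sigma>R / sqrt (\<epsilon> * Y))\<^sup>2"
    using cos by (intro power_strict_mono) simp_all
  also have "\<dots> = 6 * \<sigma>R\<^sup>2 / (\<epsilon> * Y)"
    using \<epsilon> Y by (simp add: power_divide power_mult_distrib)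
  finally have "\<epsilon> < 6 * \<sigma>R\<^sup>2 / (Y * (cos \<theta>)\<^sup>2)"
    using \<epsilon> Y cos by (simp add: field_simps)
  then have "ereal \<epsilon> < ereal (6 * \<sigma>R\<^sup>2 / ((cmod c3)\<^sup>2 * real L * pi\<^sup>2 * (cos \<theta>)\<^sup>2 * real M * real N * P * K))"
    unfolding Y_def by (simp add: ac_simps)
  also have "\<dots> \<le> CRB N M L P \<tau> \<sigma>R c3 \<alpha> \<beta> \<theta> h"
    unfolding K_def using False by (intro CRB_lower_bound[OF N M L P \<tau> c3 cos]) auto
  finally show ?thesis .
qed

section \<open>The joint law of angle and channel\<close>

lemma prob_space_cn_std: "prob_space cn_std"
proof
  have density_split: "ennreal (exp (- (cmod z)\<^sup>2) / pi) =
      (\<Prod>b\<in>Basis. ennreal (normal_density 0 (sqrt (1/2)) (z \<bullet> b)))" for z :: complex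
  proof -
    have "exp (- (cmod z)\<^sup>2) / pi = (exp (- (Re z)\<^sup>2) / sqrt pi) * (exp (- (Im z)\<^sup>2) / sqrt pi)"
      by (simp add: cmod_power2 exp_add[symmetric] exp_diff)
    then show ?thesis
      by (simp add: Basis_complex_def normal_density_def power_divide ennreal_mult'[symmetric]
          inner_complex_def)
  qed
  have normal_total: "(\<integral>\<^sup>+x. ennreal (normal_density 0 (sqrt (1/2)) x) \<partial>lborel) = 1"
  proof -
    interpret prob_space "density lborel (normal_density 0 (sqrt (1/2)))"
      by (rule prob_space_normal_density) simp
    show ?thesis using emeasure_space_1 by (simp add: emeasure_density)
  qed
  have "emeasure cn_std (space cn_std) =
      (\<integral>\<^sup>+z. (\<Prod>b\<in>Basis. ennreal (normal_density 0 (sqrt (1/2)) ((z::complex) \<bullet> b))) \<partial>lborel)"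
    unfolding cn_std_def density_split by (simp add: emeasure_density)
  also have "\<dots> = (\<Prod>b\<in>(Basis::complex set). \<integral>\<^sup>+x. ennreal (normal_density 0 (sqrt (1/2)) x) \<partial>lborel)"
    by (rule nn_integral_lborel_prod) auto
  finally show "emeasure cn_std (space cn_std) = 1" by (simp add: normal_total)
qed

lemma prob_space_cn_std_PiM: "prob_space (\<Pi>\<^sub>M i\<in>I. cn_std)"
  by (rule prob_space_PiM) (rule prob_space_cn_std)

lemma measure_uniform_angle_tail:
  fixes B :: "'b measure"
  assumes "prob_space B" and c: "0 \<le> c" "c < pi/2"
    and E: "E \<in> sets (uniform_measure lborel {-(pi/2)<..<pi/2} \<Otimes>\<^sub>M B)"
    and tail: "\<And>\<theta> h. h \<in> space B \<Longrightarrow> c < \<bar>\<theta>\<bar> \<Longrightarrow> \<bar>\<theta>\<bar> < pi/2 \<Longrightarrow> (\<theta>, h) \<in> E"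
  shows "(pi - 2 * c) / pi \<le> measure (uniform_measure lborel {-(pi/2)<..<pi/2} \<Otimes>\<^sub>M B) E"
proof -
  let ?U = "uniform_measure lborel {-(pi/2)<..<pi/2}"
  interpret B: prob_space B by fact
  interpret U: prob_space ?U by (rule prob_space_uniform_measure) auto
  interpret pair_prob_space ?U B ..
  define S where "S = {-(pi/2)<..<-c} \<union> {c<..<pi/2}"
  have S: "S \<in> sets borel" unfolding S_def by auto
  have "emeasure lborel S = emeasure lborel {-(pi/2)<..<-c} + emeasure lborel {c<..<pi/2}"
    unfolding S_def using c by (intro plus_emeasure[symmetric]) auto
  also have "\<dots> = ennreal (pi - 2 * c)"
    using c by (simp add: ennreal_plus[symmetric] del: ennreal_plus)
  moreover have "{-(pi/2)<..<pi/2} \<inter> S = S"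
    unfolding S_def using c by auto
  ultimately have "emeasure ?U S = ennreal (pi - 2 * c) / ennreal pi"
    using S by (simp add: emeasure_uniform_measure)
  then have "emeasure ?U S = ennreal ((pi - 2 * c) / pi)"
    using c by (simp add: divide_ennreal)
  then have "emeasure (?U \<Otimes>\<^sub>M B) (S \<times> space B) = ennreal ((pi - 2 * c) / pi)"
    using S B.emeasure_space_1
    by (subst B.emeasure_pair_measure_Times) (auto simp: sets_uniform_measure)
  then have "measure (?U \<Otimes>\<^sub>M B) (S \<times> space B) = (pi - 2 * c) / pi"
    using c by (simp add: measure_def)
  moreover have "S \<times> space B \<subseteq> E"
    using tail c unfolding S_def by auto
  ultimately show ?thesis
    using E by (metis P.finite_measure_mono)
qed

lemma measure_uniform_angle_cos_less:
  fixes B :: "'b measure"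
  assumes "prob_space B" and x: "0 < x" "x \<le> 1"
    and E: "E \<in> sets (uniform_measure lborel {-(pi/2)<..<pi/2} \<Otimes>\<^sub>M B)"
    and cos_less: "\<And>\<theta> h. h \<in> space B \<Longrightarrow> \<bar>\<theta>\<bar> < pi/2 \<Longrightarrow> cos \<theta> < x \<Longrightarrow> (\<theta>, h) \<in> E"
  shows "2 / pi * arcsin x \<le> measure (uniform_measure lborel {-(pi/2)<..<pi/2} \<Otimes>\<^sub>M B) E"
proof -
  have c: "0 \<le> arccos x" "arccos x < pi/2"
    using x arccos_lbound[of x] arccos_less_arccos[of 0 x] by auto
  have "(pi - 2 * arccos x) / pi \<le> measure (uniform_measure lborel {-(pi/2)<..<pi/2} \<Otimes>\<^sub>M B) E"
  proof (rule measure_uniform_angle_tail[OF assms(1) c E])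
    fix \<theta> h assume h: "h \<in> space B" and \<theta>: "arccos x < \<bar>\<theta>\<bar>" "\<bar>\<theta>\<bar> < pi/2"
    have "cos \<bar>\<theta>\<bar> < cos (arccos x)"
      using c \<theta> by (intro cos_monotone_0_pi) auto
    then show "(\<theta>, h) \<in> E" using cos_less[OF h \<theta>(2)] x by simp
  qed
  then show ?thesis using x by (simp add: arccos_arcsin_eq field_simps)
qed

lemma sets_joint_law: "sets (joint_law N) = sets (borel \<Otimes>\<^sub>M (\<Pi>\<^sub>M i\<in>{..<N}. (borel::complex measure)))"
  unfolding joint_law_def cn_std_def by (intro sets_pair_measure_cong sets_PiM_cong) auto

lemma measurable_fst_joint_law [measurable]: "fst \<in> borel_measurable (joint_law N)"
  by (simp add: measurable_cong_sets[OF sets_joint_law refl])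

lemma measurable_snd_app_joint_law [measurable]: "(\<lambda>x. snd x i) \<in> borel_measurable (joint_law N)"
proof (cases "i < N")
  case True
  then show ?thesis by (simp add: measurable_cong_sets[OF sets_joint_law refl])
next
  case False
  have "(\<lambda>x. undefined) \<in> borel_measurable (joint_law N)" by simp
  moreover have "\<And>x. x \<in> space (joint_law N) \<Longrightarrow> undefined = snd x i"
    using False unfolding joint_law_def
    by (auto simp: space_pair_measure space_PiM PiE_def extensional_def)
  ultimately show ?thesis by (rule measurable_cong[THEN iffD1, rotated])
qed

lemma borel_measurable_cnj [measurable]: "(cnj :: complex \<Rightarrow> complex) \<in> borel_measurable borel"
  by (rule borel_measurable_continuous_onI) (intro continuous_intros)

context
  fixes \<Omega> :: "'a measure" and \<theta> :: "'a \<Rightarrow> real" and h :: "'a \<Rightarrow> nat \<Rightarrow> complex"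
  assumes \<theta>_measurable [measurable]: "\<theta> \<in> borel_measurable \<Omega>"
    and h_measurable [measurable]: "\<And>i. (\<lambda>x. h x i) \<in> borel_measurable \<Omega>"
begin

lemma measurable_steer [measurable]: "(\<lambda>x. steer n (\<theta> x) i) \<in> borel_measurable \<Omega>"
  unfolding steer_def by measurable

lemma measurable_a_tilde [measurable]: "(\<lambda>x. a_tilde N (\<theta> x) i) \<in> borel_measurable \<Omega>"
  unfolding a_tilde_def vnorm_def by measurable

lemma measurable_h_tilde [measurable]: "(\<lambda>x. h_tilde N (\<theta> x) (h x) i) \<in> borel_measurable \<Omega>"
  unfolding h_tilde_def Let_def vnorm_def cinner_def by measurable

lemma measurable_Rx [measurable]: "(\<lambda>x. Rx N P \<tau> \<alpha> \<beta> (\<theta> x) (h x) i j) \<in> borel_measurable \<Omega>"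
  unfolding Rx_def Let_def outer_def by measurable

lemma measurable_Amat [measurable]: "(\<lambda>x. Amat M N (\<theta> x) i j) \<in> borel_measurable \<Omega>"
  unfolding Amat_def outer_def by measurable

lemma measurable_Adot [measurable]: "(\<lambda>x. Adot M N (\<theta> x) i j) \<in> borel_measurable \<Omega>"
  unfolding Adot_eq outer_def offset_steer_def by measurable

lemma measurable_CRB: "(\<lambda>x. CRB N M L P \<tau> \<sigma>R c3 \<alpha> \<beta> (\<theta> x) (h x)) \<in> borel_measurable \<Omega>"
  unfolding CRB_def Let_def mtr_def mmul_def madj_def by measurable

end

lemma sets_CRB_greater:
  "{x \<in> space (joint_law N). ereal \<epsilon> < CRB N M L P \<tau> \<sigma>R c3 \<alpha> \<beta> (fst x) (snd x)} \<in> sets (joint_law N)"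
proof -
  have [measurable]: "(\<lambda>x. CRB N M L P \<tau> \<sigma>R c3 \<alpha> \<beta> (fst x) (snd x)) \<in> borel_measurable (joint_law N)"
    by (rule measurable_CRB) measurable
  show ?thesis by measurable
qed

lemma measure_joint_law_cos_less:
  assumes "0 < x" and "x \<le> 1" and E: "E \<in> sets (joint_law N)"
    and cos_less: "\<And>\<theta> h. (\<theta>, h) \<in> space (joint_law N) \<Longrightarrow> \<bar>\<theta>\<bar> < pi/2 \<Longrightarrow> cos \<theta> < x \<Longrightarrow> (\<theta>, h) \<in> E"
  shows "2 / pi * arcsin x \<le> measure (joint_law N) E"
proof -
  have "2 / pi * arcsin x \<le>
      measure (uniform_measure lborel {-(pi/2)<..<pi/2} \<Otimes>\<^sub>M (\<Pi>\<^sub>M i\<in>{..<N}. cn_std)) E"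
    using E cos_less unfolding joint_law_def
    by (intro measure_uniform_angle_cos_less[OF prob_space_cn_std_PiM assms(1,2)])
      (auto simp: space_pair_measure)
  then show ?thesis unfolding joint_law_def .
qed

theorem lemma2:
  fixes N M L :: nat and P \<tau> \<sigma>R \<epsilon> :: real and c3 \<alpha> \<beta> :: complex
  assumes "N \<ge> 3" and "M \<ge> 2" and "L \<ge> 1"
    and "P > 0" and "0 \<le> \<tau>" and "\<tau> \<le> 1" and "\<sigma>R > 0" and "c3 \<noteq> 0"
    and "(cmod \<alpha>)\<^sup>2 + (cmod \<beta>)\<^sup>2 = 1"
    and "\<epsilon> > 0"
  shows "let D = \<epsilon> * real M * real N * pi\<^sup>2 * real L * P * (cmod c3)\<^sup>2 *
                 ((cmod \<alpha>)\<^sup>2 * \<tau> * ((real M)\<^sup>2 - 1) + ((real N)\<^sup>2 - 1) * (1 - \<tau>) / (real N - 2));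
             prb = measure (joint_law N) {x \<in> space (joint_law N).
                     CRB N M L P \<tau> \<sigma>R c3 \<alpha> \<beta> (fst x) (snd x) > ereal \<epsilon>}
         in (if D > 0 \<and> sqrt 6 * \<sigma>R / sqrt D < 1
             then prb \<ge> 2 / pi * arcsin (sqrt 6 * \<sigma>R / sqrt D)
             else prb \<ge> 1)"
proof -
  define D where "D = \<epsilon> * real M * real N * pi\<^sup>2 * real L * P * (cmod c3)\<^sup>2 *
    ((cmod \<alpha>)\<^sup>2 * \<tau> * ((real M)\<^sup>2 - 1) + ((real N)\<^sup>2 - 1) * (1 - \<tau>) / (real N - 2))"
  define E where "E = {x \<in> space (joint_law N). ereal \<epsilon> < CRB N M L P \<tau> \<sigma>R c3 \<alpha> \<beta> (fst x) (snd x)}"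
  have prob: "2 / pi * arcsin x \<le> measure (joint_law N) E"
    if "0 < x" "x \<le> 1" and less: "\<And>\<theta>. cos \<theta> < x \<Longrightarrow> D > 0 \<Longrightarrow> cos \<theta> < sqrt 6 * \<sigma>R / sqrt D" for x
  proof (rule measure_joint_law_cos_less[OF that(1,2)])
    show "E \<in> sets (joint_law N)" unfolding E_def by (rule sets_CRB_greater)
    fix \<theta> h assume \<theta>h: "(\<theta>, h) \<in> space (joint_law N)" "\<bar>\<theta>\<bar> < pi/2" "cos \<theta> < x"
    then have "cos \<theta> > 0" by (intro cos_gt_zero_pi) auto
    with \<theta>h show "(\<theta>, h) \<in> E"
      unfolding E_def
      using CRB_greater_of_cos_less[OF assms(1-6,8,10), where \<sigma>R=\<sigma>R and \<alpha>=\<alpha> and \<beta>=\<beta>, folded D_def]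
        less
      by auto
  qed
  have "if D > 0 \<and> sqrt 6 * \<sigma>R / sqrt D < 1
        then 2 / pi * arcsin (sqrt 6 * \<sigma>R / sqrt D) \<le> measure (joint_law N) E
        else 1 \<le> measure (joint_law N) E"
  proof (cases "D > 0 \<and> sqrt 6 * \<sigma>R / sqrt D < 1")
    case True
    then have "2 / pi * arcsin (sqrt 6 * \<sigma>R / sqrt D) \<le> measure (joint_law N) E"
      using assms(7) by (intro prob) auto
    then show ?thesis using True by simp
  next
    case False
    then have x_ge: "1 \<le> sqrt 6 * \<sigma>R / sqrt D" if "D > 0"
      using that by auto
    have "2 / pi * arcsin 1 \<le> measure (joint_law N) E"
      by (intro prob) (auto intro: less_le_trans[OF _ x_ge])
    then show ?thesis using False by (subst if_not_P) auto
  qed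
  then show ?thesis unfolding Let_def D_def E_def .
qed

end
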